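(* Let $T$ be a fair transition path, $p\in\mathbb{P}$ a nonfaulty proposer, $Q\in\mathcal{Q}$ a quorum all of whose members are nonfaulty, and $b\in\mathcal{B}$ a proposal number satisfying P1 and P2. If at some index $i$ of $T$ the proposer $p$ is ready to send prepare ($1a$) messages with proposal number $b$ to all members of $Q$, then there is an index $j$ such that in the configuration at index $j$ of $T$, $p$ has received promises ($1b$ messages) for $b$ from all members of $Q$.
   Context: Setting: the Synod consensus protocol modeled in a failure-aware actor model. An actor configuration is $\langle\alpha\,\|\,\bar\alpha\,\|\,\mu\rangle$ where $\alpha$ maps available actors to their states, $\bar\alpha$ maps failed actors to their states (states persist across failure), and $\mu$ is the multiset of messages en route. Transitions are base-level ($\mathbf{snd}$: an actor puts a message into $\mu$; $\mathbf{rcv}$: an actor removes a message addressed to it from $\mu$ and processes it; also $\mathbf{fun},\mathbf{new}$), which can only be taken by an available actor, and meta-level ($\mathbf{stp}$: an available actor becomes failed; $\mathbf{bgn}$: a failed actor becomes available). A transition path is a sequence of configurations indexed by natural numbers (logical time), each obtained from the previous by a transition; messages are never lost. Actors are partitioned into proposers $\mathbb{P}$ and acceptors $\mathbb{A}$; a quorum is a nonempty subset of $\mathbb{A}$. A message is a tuple $\langle s,r,k,b,v\rangle$ (sender, receiver, kind $k\in\{1a,1b,2a,2b\}$ = prepare, promise, accept, voted; proposal number $b$; value $v$). The local state of actor $x$ in configuration $\kappa$ consists of the set of received but not yet responded-to messages, the highest proposal number seen, and the value of the highest-numbered accepted proposal. Fair transition paths satisfy: if a $\mathbf{snd}$ or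 $\mathbf{rcv}$ transition is enabled for an actor at some index, then either it occurs at some later index or from some later index on it is permanently disabled. Protocol rules: an available acceptor holding an unresponded $1a$ message with number $b$ greater than its highest seen number becomes ready to send a $1b$ (promise) to the sender carrying $b$ and its highest accepted proposal number and value; a proposer that has received $1b$ messages for $b$ from all members of a quorum $Q$ becomes ready to send $2a$ messages with $b$ and a value chosen from its configuration to all members of $Q$; an available acceptor holding an unresponded $2a$ message with number $b$ at least its highest seen number becomes ready to send a $2b$ message with $b$ and the value to the sender; if a message addressed to an available actor is in $\mu$, a $\mathbf{rcv}$ of it is enabled. An actor $x$ is nonfaulty if: $x$ eventually becomes available whenever there is a message en route that $x$ must receive; $x$ eventually becomes available whenever its local state dictates it must send a message; and any enabled $\mathbf{snd}$ or $\mathbf{rcv}$ transition of $x$ either eventually occurs or is infinitely often enabled. A proposal number $b$ satisfies P1 and P2 if whenever an acceptor receives a prepare message with $b$, $b$ is greater than all proposal numbers that acceptor has previously seen, and whenever an acceptor receives an accept message with $b$, $b$ is greater than or equal to all proposal numbers it has previously seen. *)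

theory Defs
  imports Main "HOL-Library.Multiset"
begin

text \<open>Actors are the elements of the type 'a; they are partitioned into proposers
  and acceptors (sets passed as parameters Prop and Acc).\<close>

datatype kind = K1a | K1b | K2a | K2b

text \<open>The value component is of type (nat * 'v) option:
  1a: unused; 1b: the acceptor's highest accepted (number, value), if any;
  2a/2b: Some (b, v).\<close>
datatype ('a, 'v) msg =
  Msg (msnd: 'a) (mrcv: 'a) (mknd: kind) (mbal: nat) (mval: "(nat \<times> 'v) option")

text \<open>Local state: received-but-not-responded messages, highest proposal number
  seen, highest-numbered accepted proposal, and the set of messages the actor is
  currently ready to send.\<close>
record ('a, 'v) lstate =
  inbox :: "('a, 'v) msg set"
  hi    :: nat
  acc   :: "(nat \<times> 'v) option"
  out   :: "('a, 'v) msg set"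

text \<open>Configuration: set of available actors (domain of alpha; the others form
  the domain of alpha-bar), the state of every actor (persisting across failure),
  and the multiset of messages en route.\<close>
record ('a, 'v) config =
  av :: "'a set"
  st :: "'a \<Rightarrow> ('a, 'v) lstate"
  mu :: "('a, 'v) msg multiset"

datatype ('a, 'v) label =
  Snd 'a "('a, 'v) msg" | Rcv 'a "('a, 'v) msg" | Fun 'a | Stp 'a | Bgn 'a

definition quorum :: "'a set \<Rightarrow> 'a set \<Rightarrow> bool" where
  "quorum Acc Q \<longleftrightarrow> Q \<noteq> {} \<and> Q \<subseteq> Acc"

definition rcv_rel :: "'a set \<Rightarrow> 'a set \<Rightarrow> 'a \<Rightarrow> ('a, 'v) msg
    \<Rightarrow> ('a, 'v) lstate \<Rightarrow> ('a, 'v) lstate \<Rightarrow> bool" where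
  "rcv_rel Prop Acc a m s s' \<longleftrightarrow>
    (if a \<in> Acc \<and> mknd m = K1a then
       (if hi s < mbal m
        then s' = s\<lparr>hi := mbal m,
                    out := insert (Msg a (msnd m) K1b (mbal m) (acc s)) (out s)\<rparr>
        else s' = s)
     else if a \<in> Acc \<and> mknd m = K2a then
       (if hi s \<le> mbal m
        then s' = s\<lparr>hi := mbal m, acc := mval m,
                    out := insert (Msg a (msnd m) K2b (mbal m) (mval m)) (out s)\<rparr>
        else s' = s)
     else if a \<in> Prop \<and> mknd m = K1b then
       (\<exists>X. (X = {} \<or>
              (\<exists>Q v. quorum Acc Q \<and>
                 (\<forall>q\<in>Q. \<exists>w. Msg q a K1b (mbal m) w \<in> insert m (inbox s)) \<and>
                 X = {Msg a q K2a (mbal m) (Some (mbal m, v)) | q. q \<in> Q})) \<and>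
            s' = s\<lparr>inbox := insert m (inbox s), out := out s \<union> X\<rparr>)
     else if a \<in> Prop \<and> mknd m = K2b then
       s' = s\<lparr>inbox := insert m (inbox s)\<rparr>
     else s' = s)"

text \<open>Labelled transitions. snd/rcv/fun are base-level (only available actors);
  stp/bgn are meta-level.\<close>
definition step :: "'a set \<Rightarrow> 'a set \<Rightarrow> ('a, 'v) label
    \<Rightarrow> ('a, 'v) config \<Rightarrow> ('a, 'v) config \<Rightarrow> bool" where
  "step Prop Acc l c c' \<longleftrightarrow>
    (case l of
      Snd a m \<Rightarrow> a \<in> av c \<and> m \<in> out (st c a) \<and>
        c' = c\<lparr>st := (st c)(a := (st c a)\<lparr>out := out (st c a) - {m}\<rparr>),
               mu := mu c + {#m#}\<rparr>
    | Rcv a m \<Rightarrow> a \<in> av c \<and> m \<in># mu c \<and> mrcv m = a \<and>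
        (\<exists>s'. rcv_rel Prop Acc a m (st c a) s' \<and>
              c' = c\<lparr>st := (st c)(a := s'), mu := mu c - {#m#}\<rparr>)
    | Fun a \<Rightarrow> a \<in> av c \<and> a \<in> Prop \<and>
        (\<exists>Q b. quorum Acc Q \<and>
           c' = c\<lparr>st := (st c)(a := (st c a)\<lparr>out := out (st c a) \<union>
                      {Msg a q K1a b None | q. q \<in> Q}\<rparr>)\<rparr>)
    | Stp a \<Rightarrow> a \<in> av c \<and> c' = c\<lparr>av := av c - {a}\<rparr>
    | Bgn a \<Rightarrow> a \<notin> av c \<and> c' = c\<lparr>av := insert a (av c)\<rparr>)"

definition enabled :: "'a set \<Rightarrow> 'a set \<Rightarrow> ('a, 'v) label \<Rightarrow> ('a, 'v) config \<Rightarrow> bool" where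
  "enabled Prop Acc l c \<longleftrightarrow> (\<exists>c'. step Prop Acc l c c')"

definition occurs :: "'a set \<Rightarrow> 'a set \<Rightarrow> (nat \<Rightarrow> ('a, 'v) config) \<Rightarrow> ('a, 'v) label \<Rightarrow> nat \<Rightarrow> bool" where
  "occurs Prop Acc T l k \<longleftrightarrow> step Prop Acc l (T k) (T (Suc k))"

definition transition_path :: "'a set \<Rightarrow> 'a set \<Rightarrow> (nat \<Rightarrow> ('a, 'v) config) \<Rightarrow> bool" where
  "transition_path Prop Acc T \<longleftrightarrow> (\<forall>k. \<exists>l. occurs Prop Acc T l k)"

definition is_snd_rcv :: "('a, 'v) label \<Rightarrow> bool" where
  "is_snd_rcv l \<longleftrightarrow> (case l of Snd _ _ \<Rightarrow> True | Rcv _ _ \<Rightarrow> True | _ \<Rightarrow> False)"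

definition fair_path :: "'a set \<Rightarrow> 'a set \<Rightarrow> (nat \<Rightarrow> ('a, 'v) config) \<Rightarrow> bool" where
  "fair_path Prop Acc T \<longleftrightarrow> transition_path Prop Acc T \<and>
    (\<forall>l k. is_snd_rcv l \<and> enabled Prop Acc l (T k) \<longrightarrow>
       (\<exists>k'\<ge>k. occurs Prop Acc T l k') \<or>
       (\<exists>k'\<ge>k. \<forall>k''\<ge>k'. \<not> enabled Prop Acc l (T k'')))"

definition nonfaulty :: "'a set \<Rightarrow> 'a set \<Rightarrow> (nat \<Rightarrow> ('a, 'v) config) \<Rightarrow> 'a \<Rightarrow> bool" where
  "nonfaulty Prop Acc T x \<longleftrightarrow>
    (\<forall>k. (\<exists>m. m \<in># mu (T k) \<and> mrcv m = x) \<longrightarrow> (\<exists>k'\<ge>k. x \<in> av (T k'))) \<and>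
    (\<forall>k. out (st (T k) x) \<noteq> {} \<longrightarrow> (\<exists>k'\<ge>k. x \<in> av (T k'))) \<and>
    (\<forall>m k. \<forall>l \<in> {Snd x m, Rcv x m}. enabled Prop Acc l (T k) \<longrightarrow>
       (\<exists>k'\<ge>k. occurs Prop Acc T l k') \<or>
       (\<forall>k'. \<exists>k''\<ge>k'. enabled Prop Acc l (T k'')))"

definition P1 :: "'a set \<Rightarrow> 'a set \<Rightarrow> (nat \<Rightarrow> ('a, 'v) config) \<Rightarrow> nat \<Rightarrow> bool" where
  "P1 Prop Acc T b \<longleftrightarrow> (\<forall>a m k. a \<in> Acc \<and> mknd m = K1a \<and> mbal m = b \<and>
      occurs Prop Acc T (Rcv a m) k \<longrightarrow> hi (st (T k) a) < b)"

definition P2 :: "'a set \<Rightarrow> 'a set \<Rightarrow> (nat \<Rightarrow> ('a, 'v) config) \<Rightarrow> nat \<Rightarrow> bool" where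
  "P2 Prop Acc T b \<longleftrightarrow> (\<forall>a m k. a \<in> Acc \<and> mknd m = K2a \<and> mbal m = b \<and>
      occurs Prop Acc T (Rcv a m) k \<longrightarrow> hi (st (T k) a) \<le> b)"

end

theory Submission
  imports Defs
begin

text \<open>Each of the four transitions sending and receiving the prepare message and the promise
  eventually occurs: it stays enabled whenever its actor is available, the actor is nonfaulty
  and hence available infinitely often, and fairness forbids postponing it forever.  P1
  guarantees that the acceptor answers the prepare message with a promise.  Inboxes only
  grow, so each promise stays received, and since the quorum is finite all of them are
  present at a common index.\<close>

lemma step_out_persists:
  assumes "step Prop Acc l c c'" "m \<in> out (st c x)" "l \<noteq> Snd x m"
  shows "m \<in> out (st c' x)"
  using assms by (cases l) (auto simp: step_def rcv_rel_def split: if_splits)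

lemma step_mu_persists:
  assumes "step Prop Acc l c c'" "m \<in># mu c" "\<forall>a. l \<noteq> Rcv a m"
  shows "m \<in># mu c'"
  using assms by (cases l) (auto simp: step_def in_diff_count)

lemma step_inbox_mono:
  assumes "step Prop Acc l c c'"
  shows "inbox (st c x) \<subseteq> inbox (st c' x)"
  using assms by (cases l) (auto simp: step_def rcv_rel_def split: if_splits)

lemma transition_pathE:
  assumes "transition_path Prop Acc T"
  obtains l where "step Prop Acc l (T n) (T (Suc n))"
  using assms by (auto simp: transition_path_def occurs_def)

lemma transition_path_inbox_mono:
  assumes "transition_path Prop Acc T" "n \<le> n'"
  shows "inbox (st (T n) x) \<subseteq> inbox (st (T n') x)"
  using assms(2)
proof (induction rule: dec_induct)
  case (step k)
  obtain l where "step Prop Acc l (T k) (T (Suc k))"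
    using assms(1) by (rule transition_pathE)
  with step.IH show ?case by (blast dest: step_inbox_mono)
qed simp

lemma transition_path_eventually_in_inbox:
  assumes "transition_path Prop Acc T" "m \<in> inbox (st (T n) x)"
  shows "\<forall>\<^sub>F n' in sequentially. m \<in> inbox (st (T n') x)"
  unfolding eventually_sequentially
  using transition_path_inbox_mono[OF assms(1)] assms(2) by blast

lemma rcv_rel_exists: "\<exists>s'. rcv_rel Prop Acc a m s s'"
  unfolding rcv_rel_def by (simp split: if_split) blast

lemma enabled_Snd:
  assumes "x \<in> av c" "m \<in> out (st c x)"
  shows "enabled Prop Acc (Snd x m) c"
  using assms by (simp add: enabled_def step_def)

lemma enabled_Rcv:
  assumes "x \<in> av c" "m \<in># mu c" "mrcv m = x"
  shows "enabled Prop Acc (Rcv x m) c"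
  using assms rcv_rel_exists[of Prop Acc x m "st c x"] by (simp add: enabled_def step_def)

lemma occurs_Snd_en_route:
  assumes "occurs Prop Acc T (Snd x m) n"
  shows "m \<in># mu (T (Suc n))"
  using assms by (simp add: occurs_def step_def)

lemma occurs_RcvE:
  assumes "occurs Prop Acc T (Rcv a m) n"
  obtains s' where "rcv_rel Prop Acc a m (st (T n) a) s'" "st (T (Suc n)) a = s'"
  using assms by (auto simp: occurs_def step_def)

lemma rcv_rel_acceptor_promises:
  assumes "a \<in> Acc" "mknd m = K1a" "hi s < mbal m" "rcv_rel Prop Acc a m s s'"
  shows "Msg a (msnd m) K1b (mbal m) (acc s) \<in> out s'"
  using assms by (simp add: rcv_rel_def)

lemma rcv_rel_proposer_stores_promise:
  assumes "a \<notin> Acc" "a \<in> Prop" "mknd m = K1b" "rcv_rel Prop Acc a m s s'"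
  shows "m \<in> inbox s'"
  using assms by (auto simp: rcv_rel_def)

lemma fair_path_pending_occurs:
  assumes fair: "fair_path Prop Acc T" and "is_snd_rcv l" and "P k"
    and pending: "\<And>n. P n \<Longrightarrow> \<not> occurs Prop Acc T l n \<Longrightarrow> P (Suc n)"
    and available: "\<And>n. P n \<Longrightarrow> \<exists>n'\<ge>n. x \<in> av (T n')"
    and enabled: "\<And>n. P n \<Longrightarrow> x \<in> av (T n) \<Longrightarrow> enabled Prop Acc l (T n)"
  shows "\<exists>n\<ge>k. occurs Prop Acc T l n"
proof (rule ccontr)
  assume never: "\<not> (\<exists>n\<ge>k. occurs Prop Acc T l n)"
  have always_pending: "P n" if "k \<le> n" for n
    using that
  proof (induction rule: dec_induct)
    case (step n)
    with never have "\<not> occurs Prop Acc T l n" by blast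
    with step.IH show ?case by (rule pending)
  qed (rule \<open>P k\<close>)
  have infinitely_enabled: "\<exists>n'\<ge>n. enabled Prop Acc l (T n')" if "k \<le> n" for n
  proof -
    obtain n' where "n' \<ge> n" "x \<in> av (T n')"
      using available[OF always_pending[OF \<open>k \<le> n\<close>]] by blast
    moreover from \<open>n' \<ge> n\<close> \<open>k \<le> n\<close> have "P n'"
      by (intro always_pending) linarith
    ultimately show ?thesis using enabled by blast
  qed
  obtain n0 where "n0 \<ge> k" "enabled Prop Acc l (T n0)"
    using infinitely_enabled[OF order_refl] by blast
  with fair \<open>is_snd_rcv l\<close> consider
      k' where "k' \<ge> n0" "occurs Prop Acc T l k'"
    | k' where "k' \<ge> n0" "\<forall>k''\<ge>k'. \<not> enabled Prop Acc l (T k'')"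
    unfolding fair_path_def by (metis (no_types, lifting))
  then show False
  proof cases
    case 1
    with never \<open>n0 \<ge> k\<close> show False by (meson order_trans)
  next
    case 2
    with \<open>n0 \<ge> k\<close> obtain k'' where "k'' \<ge> k'" "enabled Prop Acc l (T k'')"
      using infinitely_enabled[of k'] by (meson order_trans)
    with 2 show False by blast
  qed
qed

lemma nonfaulty_available:
  assumes "nonfaulty Prop Acc T x"
  shows "m \<in> out (st (T n) x) \<Longrightarrow> \<exists>n'\<ge>n. x \<in> av (T n')"
    and "m \<in># mu (T n) \<Longrightarrow> mrcv m = x \<Longrightarrow> \<exists>n'\<ge>n. x \<in> av (T n')"
  using assms unfolding nonfaulty_def by blast+

lemma nonfaulty_sends:
  assumes fair: "fair_path Prop Acc T" and nf: "nonfaulty Prop Acc T x"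
    and "m \<in> out (st (T k) x)"
  shows "\<exists>n. m \<in># mu (T n)"
proof -
  have "\<exists>n\<ge>k. occurs Prop Acc T (Snd x m) n"
  proof (rule fair_path_pending_occurs[where P = "\<lambda>n. m \<in> out (st (T n) x)" and x = x])
    fix n
    assume "m \<in> out (st (T n) x)" "\<not> occurs Prop Acc T (Snd x m) n"
    moreover obtain l where "step Prop Acc l (T n) (T (Suc n))"
      using fair unfolding fair_path_def by (blast elim: transition_pathE)
    ultimately show "m \<in> out (st (T (Suc n)) x)"
      by (metis occurs_def step_out_persists)
  qed (use fair nf \<open>m \<in> out (st (T k) x)\<close> in
        \<open>simp_all add: is_snd_rcv_def enabled_Snd nonfaulty_available(1)\<close>)
  then show ?thesis by (blast dest: occurs_Snd_en_route)
qed

lemma nonfaulty_receives: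
  assumes fair: "fair_path Prop Acc T" and nf: "nonfaulty Prop Acc T x"
    and "m \<in># mu (T k)" and rcv: "mrcv m = x"
  shows "\<exists>n. occurs Prop Acc T (Rcv x m) n"
proof -
  have "\<exists>n\<ge>k. occurs Prop Acc T (Rcv x m) n"
  proof (rule fair_path_pending_occurs[where P = "\<lambda>n. m \<in># mu (T n)" and x = x])
    fix n
    assume "m \<in># mu (T n)" "\<not> occurs Prop Acc T (Rcv x m) n"
    moreover obtain l where "step Prop Acc l (T n) (T (Suc n))"
      using fair unfolding fair_path_def by (blast elim: transition_pathE)
    moreover have "\<forall>a. l \<noteq> Rcv a m"
      \<comment> \<open>only the receiver can take a message out of transit\<close>
      using calculation rcv by (auto simp: occurs_def step_def)
    ultimately show "m \<in># mu (T (Suc n))"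
      by (blast intro: step_mu_persists)
  qed (use fair nf rcv \<open>m \<in># mu (T k)\<close> in
        \<open>simp_all add: is_snd_rcv_def enabled_Rcv nonfaulty_available(2)\<close>)
  then show ?thesis by blast
qed

lemma promise_eventually_received:
  assumes fair: "fair_path Prop Acc T"
    and p: "p \<in> Prop" "p \<notin> Acc" "nonfaulty Prop Acc T p"
    and q: "q \<in> Acc" "nonfaulty Prop Acc T q"
    and "P1 Prop Acc T b"
    and prepare: "Msg p q K1a b v \<in> out (st (T i) p)"
  shows "\<forall>\<^sub>F n in sequentially. \<exists>w. Msg q p K1b b w \<in> inbox (st (T n) p)"
proof -
  obtain k1 where "Msg p q K1a b v \<in># mu (T k1)"
    using nonfaulty_sends[OF fair p(3) prepare] by blast
  then obtain k2 where rcv_prepare: "occurs Prop Acc T (Rcv q (Msg p q K1a b v)) k2"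
    using nonfaulty_receives[OF fair q(2)] by fastforce
  with \<open>P1 Prop Acc T b\<close> q(1) have "hi (st (T k2) q) < b"
    unfolding P1_def by (metis msg.sel(3,4))
  define promise where "promise = Msg q p K1b b (acc (st (T k2) q))"
  obtain s where answer: "rcv_rel Prop Acc q (Msg p q K1a b v) (st (T k2) q) s"
    and "st (T (Suc k2)) q = s"
    using rcv_prepare by (rule occurs_RcvE)
  then have "promise \<in> out (st (T (Suc k2)) q)"
    using rcv_rel_acceptor_promises[OF q(1) _ _ answer] \<open>hi (st (T k2) q) < b\<close>
    by (simp add: promise_def)
  then obtain k3 where "promise \<in># mu (T k3)"
    using nonfaulty_sends[OF fair q(2)] by blast
  then obtain k4 where "occurs Prop Acc T (Rcv p promise) k4"
    using nonfaulty_receives[OF fair p(3)] by (fastforce simp: promise_def)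
  then obtain s where store: "rcv_rel Prop Acc p promise (st (T k4) p) s"
    and "st (T (Suc k4)) p = s"
    by (rule occurs_RcvE)
  then have "promise \<in> inbox (st (T (Suc k4)) p)"
    using rcv_rel_proposer_stores_promise[OF p(2,1) _ store] by (simp add: promise_def)
  with fair have "\<forall>\<^sub>F n in sequentially. promise \<in> inbox (st (T n) p)"
    unfolding fair_path_def by (blast intro: transition_path_eventually_in_inbox)
  then show ?thesis
    by (rule eventually_mono) (auto simp: promise_def)
qed

theorem lemma1:
  fixes Prop Acc :: "'a set" and T :: "nat \<Rightarrow> ('a, 'v) config"
    and p :: 'a and Q :: "'a set" and b :: nat and i :: nat
  assumes "Prop \<inter> Acc = {}" and "Prop \<union> Acc = UNIV" and "finite Acc"
    and "fair_path Prop Acc T"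
    and "p \<in> Prop" and "nonfaulty Prop Acc T p"
    and "quorum Acc Q" and "\<forall>q\<in>Q. nonfaulty Prop Acc T q"
    and "P1 Prop Acc T b" and "P2 Prop Acc T b"
    and "\<forall>q\<in>Q. \<exists>v. Msg p q K1a b v \<in> out (st (T i) p)"
  shows "\<exists>j. \<forall>q\<in>Q. \<exists>v. Msg q p K1b b v \<in> inbox (st (T j) p)"
proof -
  have "Q \<subseteq> Acc" "p \<notin> Acc"
    using assms(1,5,7) by (auto simp: quorum_def)
  have "finite Q"
    using \<open>Q \<subseteq> Acc\<close> \<open>finite Acc\<close> by (rule finite_subset)
  moreover have "\<forall>q\<in>Q. \<forall>\<^sub>F n in sequentially. \<exists>v. Msg q p K1b b v \<in> inbox (st (T n) p)"
  proof
    fix q assume "q \<in> Q"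
    then have "q \<in> Acc" "nonfaulty Prop Acc T q"
      using \<open>Q \<subseteq> Acc\<close> assms(8) by auto
    obtain v where "Msg p q K1a b v \<in> out (st (T i) p)"
      using \<open>q \<in> Q\<close> assms(11) by blast
    then show "\<forall>\<^sub>F n in sequentially. \<exists>v. Msg q p K1b b v \<in> inbox (st (T n) p)"
      using promise_eventually_received[OF assms(4,5) \<open>p \<notin> Acc\<close> assms(6)
          \<open>q \<in> Acc\<close> \<open>nonfaulty Prop Acc T q\<close> assms(9)] by blast
  qed
  ultimately have "\<forall>\<^sub>F n in sequentially. \<forall>q\<in>Q. \<exists>v. Msg q p K1b b v \<in> inbox (st (T n) p)"
    by (rule eventually_ball_finite)
  then show ?thesis
    unfolding eventually_sequentially by blast
qed

end
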